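(* Let $X_1,\ldots,X_n$ be $\{0,1\}$-valued random variables satisfying negative regression. Let $K\subseteq[n]$, $a_K\in\{0,1\}^K$, and $i\in[n]\setminus K$ with $\Pr[X_K=a_K,X_i=0]>0$ and $\Pr[X_K=a_K,X_i=1]>0$. Let $L=[n]\setminus(K\cup\{i\})$ and for $c\in\{0,1\}$ let $\mu^{(c)}$ be the distribution on $\{0,1\}^L$ given by $\mu^{(c)}(x)=\Pr[X_L=x\mid X_K=a_K,X_i=c]$. Then there exists a function $\nu:\{0,1\}^L\times\{0,1\}^L\to[0,1]$ such that $\mu^{(1)}(x)=\sum_{y}\nu(x,y)$ for all $x$, $\mu^{(0)}(y)=\sum_x\nu(x,y)$ for all $y$, and $\nu(x,y)=0$ unless $x\le y$ coordinatewise.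
   Context: For $S\subseteq[n]$, $X_S\in\{0,1\}^S$ denotes the tuple $(X_i)_{i\in S}$. The variables $X_1,\ldots,X_n$ satisfy negative regression if for all disjoint $I,J\subseteq[n]$, every non-decreasing function $g:\{0,1\}^I\to\mathbb{R}$, and all $a\le b$ in $\{0,1\}^J$ (coordinatewise) such that $\Pr[X_J=a]>0$ and $\Pr[X_J=b]>0$, we have $\mathbb{E}[g(X_I)\mid X_J=a]\ge \mathbb{E}[g(X_I)\mid X_J=b]$. *)

theory Defs
  imports "HOL-Probability.Probability"
begin

text \<open>The random variables X_1, ..., X_n live on a discrete probability space P
  (an 'a pmf) and are given by X :: nat => 'a => bool (False = 0, True = 1).
  For S a set of indices, X_S is represented by the extensional function
  restricted to S; tuples in {0,1}^S are elements of S ->E UNIV.\<close>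

definition tup :: "(nat \<Rightarrow> 'a \<Rightarrow> bool) \<Rightarrow> nat set \<Rightarrow> 'a \<Rightarrow> (nat \<Rightarrow> bool)" where
  "tup X S \<omega> = restrict (\<lambda>j. X j \<omega>) S"

definition cond_exp :: "'a pmf \<Rightarrow> 'a set \<Rightarrow> ('a \<Rightarrow> real) \<Rightarrow> real" where
  "cond_exp P A f = measure_pmf.expectation P (\<lambda>\<omega>. indicator A \<omega> * f \<omega>) / measure_pmf.prob P A"

definition negative_regression :: "nat \<Rightarrow> 'a pmf \<Rightarrow> (nat \<Rightarrow> 'a \<Rightarrow> bool) \<Rightarrow> bool" where
  "negative_regression n P X \<longleftrightarrow>
     (\<forall>I J. I \<subseteq> {1..n} \<longrightarrow> J \<subseteq> {1..n} \<longrightarrow> I \<inter> J = {} \<longrightarrow>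
       (\<forall>g :: (nat \<Rightarrow> bool) \<Rightarrow> real. mono_on (I \<rightarrow>\<^sub>E (UNIV :: bool set)) g \<longrightarrow>
         (\<forall>a \<in> J \<rightarrow>\<^sub>E (UNIV :: bool set). \<forall>b \<in> J \<rightarrow>\<^sub>E (UNIV :: bool set).
            (\<forall>j\<in>J. a j \<le> b j) \<longrightarrow>
            measure_pmf.prob P {\<omega>. tup X J \<omega> = a} > 0 \<longrightarrow>
            measure_pmf.prob P {\<omega>. tup X J \<omega> = b} > 0 \<longrightarrow>
            cond_exp P {\<omega>. tup X J \<omega> = a} (\<lambda>\<omega>. g (tup X I \<omega>))
              \<ge> cond_exp P {\<omega>. tup X J \<omega> = b} (\<lambda>\<omega>. g (tup X I \<omega>)))))"

definition cond_dist :: "'a pmf \<Rightarrow> (nat \<Rightarrow> 'a \<Rightarrow> bool) \<Rightarrow> nat set \<Rightarrow> nat set \<Rightarrow> (nat \<Rightarrow> bool)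
    \<Rightarrow> nat \<Rightarrow> bool \<Rightarrow> (nat \<Rightarrow> bool) \<Rightarrow> real" where
  "cond_dist P X L K aK i c x =
     measure_pmf.prob P {\<omega>. tup X L \<omega> = x \<and> tup X K \<omega> = aK \<and> X i \<omega> = c}
     / measure_pmf.prob P {\<omega>. tup X K \<omega> = aK \<and> X i \<omega> = c}"

end

theory Submission
  imports Defs
begin

text \<open>
  Write \<open>\<mu>\<^sub>c\<close> for the conditional law of \<open>X\<^sub>L\<close> given \<open>X\<^sub>K = a\<^sub>K, X\<^sub>i = c\<close>. Negative regression,
  applied to the indicator of an up-set \<open>U\<close> of \<open>{0,1}\<^sup>L\<close>, gives \<open>\<mu>\<^sub>1(U) \<le> \<mu>\<^sub>0(U)\<close>: the law
  \<open>\<mu>\<^sub>1\<close> is stochastically dominated by \<open>\<mu>\<^sub>0\<close>, and the monotone coupling is Strassen's theorem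
  for a finite poset. Strassen's theorem follows from the weighted Hall (supply--demand) theorem:
  if every set \<open>A\<close> of sources satisfies \<open>p(A) \<le> q(N(A))\<close>, all supply \<open>p\<close> can be routed along
  the relation without exceeding the demands \<open>q\<close>. That is proved by induction on \<open>|X| + |Y|\<close>:
  push as much mass as Hall's condition allows along one edge; at that maximum either a supply
  or a demand is exhausted and a vertex can be dropped, or some Hall inequality becomes tight and
  the instance splits into the tight set with its neighbourhood and the rest.
\<close>

definition nbhd :: "('x \<Rightarrow> 'y \<Rightarrow> bool) \<Rightarrow> 'y set \<Rightarrow> 'x set \<Rightarrow> 'y set" where
  "nbhd R Y A = {y\<in>Y. \<exists>x\<in>A. R x y}"

definition hall_condition ::
    "('x \<Rightarrow> 'y \<Rightarrow> bool) \<Rightarrow> 'x set \<Rightarrow> 'y set \<Rightarrow> ('x \<Rightarrow> real) \<Rightarrow> ('y \<Rightarrow> real) \<Rightarrow> bool" where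
  "hall_condition R X Y p q \<longleftrightarrow> (\<forall>A\<subseteq>X. sum p A \<le> sum q (nbhd R Y A))"

definition subcoupling :: "('x \<Rightarrow> 'y \<Rightarrow> bool) \<Rightarrow> 'x set \<Rightarrow> 'y set \<Rightarrow> ('x \<Rightarrow> real) \<Rightarrow> ('y \<Rightarrow> real)
    \<Rightarrow> ('x \<Rightarrow> 'y \<Rightarrow> real) \<Rightarrow> bool" where
  "subcoupling R X Y p q \<nu> \<longleftrightarrow>
     (\<forall>x y. 0 \<le> \<nu> x y) \<and> (\<forall>x y. \<nu> x y \<noteq> 0 \<longrightarrow> x \<in> X \<and> y \<in> Y \<and> R x y) \<and>
     (\<forall>x\<in>X. sum (\<nu> x) Y = p x) \<and> (\<forall>y\<in>Y. (\<Sum>x\<in>X. \<nu> x y) \<le> q y)"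

definition hall_reducible ::
    "('x \<Rightarrow> 'y \<Rightarrow> bool) \<Rightarrow> 'x set \<Rightarrow> 'y set \<Rightarrow> ('x \<Rightarrow> real) \<Rightarrow> ('y \<Rightarrow> real) \<Rightarrow> bool" where
  "hall_reducible R X Y p q \<longleftrightarrow>
     (\<exists>x\<in>X. p x = 0) \<or> (\<exists>y\<in>Y. q y = 0) \<or>
     (\<exists>A\<subseteq>X. A \<noteq> {} \<and> A \<noteq> X \<and> sum p A = sum q (nbhd R Y A))"

lemma subcoupling_cong:
  assumes "subcoupling R X Y p q \<nu>" "\<forall>x\<in>X. p x = p' x" "\<forall>y\<in>Y. q y = q' y"
  shows "subcoupling R X Y p' q' \<nu>"
  using assms unfolding subcoupling_def by auto

lemma subcoupling_enlarge:
  assumes \<nu>: "subcoupling R X' Y' p q \<nu>" and "X' \<subseteq> X" "Y' \<subseteq> Y" "finite X" "finite Y"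
    and "\<forall>x\<in>X - X'. p x = 0" and "\<forall>y\<in>Y - Y'. 0 \<le> q y"
  shows "subcoupling R X Y p q \<nu>"
proof -
  from \<nu> have nonneg: "\<forall>x y. 0 \<le> \<nu> x y"
    and supp: "\<forall>x y. \<nu> x y \<noteq> 0 \<longrightarrow> x \<in> X' \<and> y \<in> Y' \<and> R x y"
    and rows: "\<forall>x\<in>X'. sum (\<nu> x) Y' = p x" and cols: "\<forall>y\<in>Y'. (\<Sum>x\<in>X'. \<nu> x y) \<le> q y"
    unfolding subcoupling_def by auto
  have "sum (\<nu> x) Y = p x" if "x \<in> X" for x
  proof (cases "x \<in> X'")
    case True
    have "sum (\<nu> x) Y = sum (\<nu> x) Y'"
      by (rule sum.mono_neutral_right) (use assms supp in auto)
    then show ?thesis using rows True by simp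
  next
    case False
    then have "\<forall>y. \<nu> x y = 0" using supp by blast
    then show ?thesis using False that assms by simp
  qed
  moreover have "(\<Sum>x\<in>X. \<nu> x y) \<le> q y" if "y \<in> Y" for y
  proof (cases "y \<in> Y'")
    case True
    have "(\<Sum>x\<in>X. \<nu> x y) = (\<Sum>x\<in>X'. \<nu> x y)"
      by (rule sum.mono_neutral_right) (use assms supp in auto)
    then show ?thesis using cols True by simp
  next
    case False
    then have "\<forall>x. \<nu> x y = 0" using supp by blast
    then show ?thesis using False that assms by simp
  qed
  ultimately show ?thesis using nonneg supp assms unfolding subcoupling_def by blast
qed

lemma subcoupling_add:
  assumes "subcoupling R X Y p1 q1 \<nu>1" "subcoupling R X Y p2 q2 \<nu>2"
  shows "subcoupling R X Y (\<lambda>x. p1 x + p2 x) (\<lambda>y. q1 y + q2 y) (\<lambda>x y. \<nu>1 x y + \<nu>2 x y)"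
  using assms unfolding subcoupling_def
  by (auto simp: sum.distrib intro: add_mono add_nonneg_nonneg) (metis add.right_neutral)+

lemma subcoupling_point_mass:
  assumes "finite X" "finite Y" "x0 \<in> X" "y0 \<in> Y" "R x0 y0" "0 \<le> t"
  shows "subcoupling R X Y (\<lambda>x. if x = x0 then t else 0) (\<lambda>y. if y = y0 then t else 0)
           (\<lambda>x y. if x = x0 \<and> y = y0 then t else 0)"
  using assms unfolding subcoupling_def by auto

lemma subcoupling_glue:
  assumes "subcoupling R A N p q \<nu>1" "subcoupling R (X - A) (Y - N) p q \<nu>2"
    and "A \<subseteq> X" "N \<subseteq> Y" "finite X" "finite Y"
  shows "subcoupling R X Y p q (\<lambda>x y. \<nu>1 x y + \<nu>2 x y)"
proof -
  have "subcoupling R X Y (\<lambda>x. if x \<in> A then p x else 0) (\<lambda>y. if y \<in> N then q y else 0) \<nu>1"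
    by (rule subcoupling_enlarge[of _ A N]) (use assms in \<open>auto intro: subcoupling_cong\<close>)
  moreover have "subcoupling R X Y (\<lambda>x. if x \<in> A then 0 else p x) (\<lambda>y. if y \<in> N then 0 else q y) \<nu>2"
    by (rule subcoupling_enlarge[of _ "X - A" "Y - N"]) (use assms in \<open>auto intro: subcoupling_cong\<close>)
  ultimately show ?thesis
    by (rule subcoupling_cong[OF subcoupling_add]) auto
qed

lemma subcoupling_le_marginal:
  assumes "subcoupling R X Y p q \<nu>" "finite Y" "x \<in> X"
  shows "\<nu> x y \<le> p x"
proof -
  from assms(1,3) have nonneg: "\<And>y. 0 \<le> \<nu> x y" and supp: "\<nu> x y \<noteq> 0 \<Longrightarrow> y \<in> Y"
    and row: "sum (\<nu> x) Y = p x"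
    unfolding subcoupling_def by auto
  show ?thesis
  proof (cases "y \<in> Y")
    case True
    then have "\<nu> x y \<le> sum (\<nu> x) Y" using nonneg assms(2) by (intro member_le_sum)
    then show ?thesis using row by simp
  next
    case False
    then have "\<nu> x y = 0" using supp by blast
    moreover have "0 \<le> sum (\<nu> x) Y" using nonneg by (intro sum_nonneg)
    ultimately show ?thesis using row by simp
  qed
qed

lemma subcoupling_balanced_columns:
  assumes \<nu>: "subcoupling R X Y p q \<nu>" and fin: "finite X" "finite Y" and mass: "sum p X = sum q Y"
  shows "\<forall>y\<in>Y. (\<Sum>x\<in>X. \<nu> x y) = q y"
proof -
  have slack_nonneg: "\<forall>y\<in>Y. 0 \<le> q y - (\<Sum>x\<in>X. \<nu> x y)"
    using \<nu> unfolding subcoupling_def by auto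
  have "(\<Sum>y\<in>Y. \<Sum>x\<in>X. \<nu> x y) = (\<Sum>x\<in>X. \<Sum>y\<in>Y. \<nu> x y)" by (rule sum.swap)
  also have "\<dots> = sum q Y" using \<nu> mass unfolding subcoupling_def by simp
  finally have "(\<Sum>y\<in>Y. q y - (\<Sum>x\<in>X. \<nu> x y)) = 0" by (simp only: sum_subtractf)
  then have "\<forall>y\<in>Y. q y - (\<Sum>x\<in>X. \<nu> x y) = 0"
    by (subst (asm) sum_nonneg_eq_0_iff[OF fin(2)]) (use slack_nonneg in auto)
  then show ?thesis by simp
qed

lemma hall_condition_subset: "hall_condition R X Y p q \<Longrightarrow> X' \<subseteq> X \<Longrightarrow> hall_condition R X' Y p q"
  unfolding hall_condition_def by auto

lemma hall_condition_remove_null_target: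
  assumes "hall_condition R X Y p q" "finite Y" "q y0 = 0"
  shows "hall_condition R X (Y - {y0}) p q"
  unfolding hall_condition_def
proof (intro allI impI)
  fix A assume "A \<subseteq> X"
  have "nbhd R (Y - {y0}) A = nbhd R Y A - {y0}" unfolding nbhd_def by auto
  moreover have "finite (nbhd R Y A)" using assms(2) unfolding nbhd_def by auto
  ultimately have "sum q (nbhd R (Y - {y0}) A) = sum q (nbhd R Y A)"
    using assms(3) by (simp add: sum_diff1)
  then show "sum p A \<le> sum q (nbhd R (Y - {y0}) A)"
    using assms(1) \<open>A \<subseteq> X\<close> unfolding hall_condition_def by auto
qed

lemma hall_condition_restrict_to_nbhd:
  assumes "hall_condition R X Y p q" "A \<subseteq> X"
  shows "hall_condition R A (nbhd R Y A) p q"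
  unfolding hall_condition_def
proof (intro allI impI)
  fix B assume "B \<subseteq> A"
  then have "nbhd R (nbhd R Y A) B = nbhd R Y B" unfolding nbhd_def by auto
  then show "sum p B \<le> sum q (nbhd R (nbhd R Y A) B)"
    using assms \<open>B \<subseteq> A\<close> unfolding hall_condition_def by auto
qed

lemma hall_condition_remove_tight:
  assumes hall: "hall_condition R X Y p q" and "finite X" "finite Y" "A \<subseteq> X"
    and tight: "sum p A = sum q (nbhd R Y A)"
  shows "hall_condition R (X - A) (Y - nbhd R Y A) p q"
  unfolding hall_condition_def
proof (intro allI impI)
  fix B assume B: "B \<subseteq> X - A"
  have "finite A" "finite B" using assms B finite_subset by blast+
  then have "sum p (A \<union> B) = sum p A + sum p B" using B by (intro sum.union_disjoint) auto
  moreover have "sum p (A \<union> B) \<le> sum q (nbhd R Y (A \<union> B))"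
    using hall B \<open>A \<subseteq> X\<close> unfolding hall_condition_def by (meson Diff_subset Un_least order_trans)
  moreover have "nbhd R Y (A \<union> B) = nbhd R Y A \<union> nbhd R (Y - nbhd R Y A) B"
    unfolding nbhd_def by auto
  then have "sum q (nbhd R Y (A \<union> B)) = sum q (nbhd R Y A) + sum q (nbhd R (Y - nbhd R Y A) B)"
    using \<open>finite Y\<close> by (auto intro: sum.union_disjoint simp: nbhd_def)
  ultimately show "sum p B \<le> sum q (nbhd R (Y - nbhd R Y A) B)" using tight by linarith
qed

lemma hall_condition_diff_edge:
  assumes hall: "hall_condition R X Y p q" and "finite X" "finite Y" "b \<in> Y" "R a b"
    and slack: "\<And>A. A \<subseteq> X - {a} \<Longrightarrow> b \<in> nbhd R Y A \<Longrightarrow> sum p A + t \<le> sum q (nbhd R Y A)"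
  shows "hall_condition R X Y (\<lambda>x. p x - (if x = a then t else 0)) (\<lambda>y. q y - (if y = b then t else 0))"
  unfolding hall_condition_def
proof (intro allI impI)
  fix A assume A: "A \<subseteq> X"
  have "finite A" "finite (nbhd R Y A)" using A assms finite_subset unfolding nbhd_def by auto
  then have sums: "(\<Sum>x\<in>A. p x - (if x = a then t else 0)) = sum p A - (if a \<in> A then t else 0)"
      "(\<Sum>y\<in>nbhd R Y A. q y - (if y = b then t else 0))
         = sum q (nbhd R Y A) - (if b \<in> nbhd R Y A then t else 0)"
    by (simp_all add: sum_subtractf)
  have "sum p A \<le> sum q (nbhd R Y A)" using hall A unfolding hall_condition_def by auto
  moreover have "a \<in> A \<Longrightarrow> b \<in> nbhd R Y A" using assms unfolding nbhd_def by auto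
  moreover have "a \<notin> A \<Longrightarrow> b \<in> nbhd R Y A \<Longrightarrow> sum p A + t \<le> sum q (nbhd R Y A)"
    using slack A by auto
  ultimately show "(\<Sum>x\<in>A. p x - (if x = a then t else 0))
      \<le> (\<Sum>y\<in>nbhd R Y A. q y - (if y = b then t else 0))"
    unfolding sums by auto
qed

lemma hall_condition_saturate_edge:
  assumes hall: "hall_condition R X Y p q" and fin: "finite X" "finite Y"
    and nonneg: "\<forall>x\<in>X. 0 \<le> p x" "\<forall>y\<in>Y. 0 \<le> q y"
    and edge: "x0 \<in> X" "y0 \<in> Y" "R x0 y0"
  obtains t where "0 \<le> t" "t \<le> p x0" "t \<le> q y0"
    "hall_condition R X Y (\<lambda>x. p x - (if x = x0 then t else 0)) (\<lambda>y. q y - (if y = y0 then t else 0))"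
    "t = p x0 \<or> t = q y0 \<or> (\<exists>A \<subseteq> X - {x0}. y0 \<in> nbhd R Y A \<and> sum p A + t = sum q (nbhd R Y A))"
proof -
  define \<A> where "\<A> = {A. A \<subseteq> X - {x0} \<and> y0 \<in> nbhd R Y A}"
  define T where "T = insert (p x0) (insert (q y0) ((\<lambda>A. sum q (nbhd R Y A) - sum p A) ` \<A>))"
  define t where "t = Min T"
  have "\<A> \<subseteq> Pow X" unfolding \<A>_def by auto
  then have "finite T" unfolding T_def using fin finite_subset by blast
  have t_in: "t \<in> T" unfolding t_def using \<open>finite T\<close> by (rule Min_in) (simp add: T_def)
  have t_le: "t \<le> s" if "s \<in> T" for s unfolding t_def using \<open>finite T\<close> that by (rule Min_le)
  have slack: "sum p A + t \<le> sum q (nbhd R Y A)" if "A \<in> \<A>" for A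
    using t_le[of "sum q (nbhd R Y A) - sum p A"] that unfolding T_def by simp
  have "sum p A \<le> sum q (nbhd R Y A)" if "A \<in> \<A>" for A
    using hall that unfolding hall_condition_def \<A>_def by blast
  then have "0 \<le> t" using t_in nonneg edge unfolding T_def by auto
  moreover have "t \<le> p x0" "t \<le> q y0" using t_le unfolding T_def by simp_all
  moreover have "hall_condition R X Y (\<lambda>x. p x - (if x = x0 then t else 0))
      (\<lambda>y. q y - (if y = y0 then t else 0))"
    by (rule hall_condition_diff_edge[OF hall fin edge(2,3)]) (use slack in \<open>simp add: \<A>_def\<close>)
  moreover have "t = p x0 \<or> t = q y0 \<or> (\<exists>A\<in>\<A>. sum p A + t = sum q (nbhd R Y A))"
    using t_in unfolding T_def by force
  ultimately show thesis using that unfolding \<A>_def by blast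
qed

lemma hall_reducible_after_saturation:
  assumes fin: "finite X" "finite Y" and edge: "x0 \<in> X" "y0 \<in> Y"
    and saturated: "t = p x0 \<or> t = q y0
      \<or> (\<exists>A \<subseteq> X - {x0}. y0 \<in> nbhd R Y A \<and> sum p A + t = sum q (nbhd R Y A))"
  shows "hall_reducible R X Y (\<lambda>x. p x - (if x = x0 then t else 0)) (\<lambda>y. q y - (if y = y0 then t else 0))"
  using saturated
proof (elim disjE exE conjE)
  assume "t = p x0"
  then show ?thesis unfolding hall_reducible_def using edge by force
next
  assume "t = q y0"
  then show ?thesis unfolding hall_reducible_def using edge by force
next
  fix A assume A: "A \<subseteq> X - {x0}" "y0 \<in> nbhd R Y A" and tight: "sum p A + t = sum q (nbhd R Y A)"
  have "finite A" "finite (nbhd R Y A)" using A fin finite_subset unfolding nbhd_def by auto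
  then have "(\<Sum>x\<in>A. p x - (if x = x0 then t else 0)) = (\<Sum>y\<in>nbhd R Y A. q y - (if y = y0 then t else 0))"
    using A tight by (auto simp: sum_subtractf)
  moreover have "A \<noteq> {}" using A(2) unfolding nbhd_def by auto
  ultimately show ?thesis unfolding hall_reducible_def using A(1) edge(1) by blast
qed

lemma subcoupling_exists_if_reducible:
  assumes IH: "\<And>X' Y' p q. card X' + card Y' < card X + card Y \<Longrightarrow> finite X' \<Longrightarrow> finite Y'
      \<Longrightarrow> \<forall>x\<in>X'. 0 \<le> p x \<Longrightarrow> \<forall>y\<in>Y'. 0 \<le> q y \<Longrightarrow> hall_condition R X' Y' p q
      \<Longrightarrow> \<exists>\<nu>. subcoupling R X' Y' p q \<nu>"
    and fin: "finite X" "finite Y" and nonneg: "\<forall>x\<in>X. 0 \<le> p x" "\<forall>y\<in>Y. 0 \<le> q y"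
    and hall: "hall_condition R X Y p q" and reducible: "hall_reducible R X Y p q"
  shows "\<exists>\<nu>. subcoupling R X Y p q \<nu>"
  using reducible[unfolded hall_reducible_def]
proof (elim disjE bexE exE conjE)
  fix x0 assume "x0 \<in> X" "p x0 = 0"
  have "card (X - {x0}) < card X" using \<open>x0 \<in> X\<close> fin by (meson card_Diff1_less)
  then obtain \<nu> where "subcoupling R (X - {x0}) Y p q \<nu>"
    using IH[of "X - {x0}" Y p q] fin nonneg hall_condition_subset[OF hall, of "X - {x0}"] by auto
  then have "subcoupling R X Y p q \<nu>"
    by (rule subcoupling_enlarge) (use fin \<open>p x0 = 0\<close> in auto)
  then show ?thesis by blast
next
  fix y0 assume "y0 \<in> Y" "q y0 = 0"
  have "card (Y - {y0}) < card Y" using \<open>y0 \<in> Y\<close> fin by (meson card_Diff1_less)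
  then obtain \<nu> where "subcoupling R X (Y - {y0}) p q \<nu>"
    using IH[of X "Y - {y0}" p q] fin nonneg hall_condition_remove_null_target[OF hall] \<open>q y0 = 0\<close>
    by auto
  then have "subcoupling R X Y p q \<nu>"
    by (rule subcoupling_enlarge) (use fin \<open>q y0 = 0\<close> in auto)
  then show ?thesis by blast
next
  fix A assume A: "A \<subseteq> X" "A \<noteq> {}" "A \<noteq> X" and tight: "sum p A = sum q (nbhd R Y A)"
  have N: "nbhd R Y A \<subseteq> Y" unfolding nbhd_def by auto
  have "card A < card X" "card (X - A) < card X" "card (nbhd R Y A) \<le> card Y"
    "card (Y - nbhd R Y A) \<le> card Y"
    using A N fin by (auto intro: psubset_card_mono card_mono)
  moreover have "finite A" "finite (nbhd R Y A)" "finite (X - A)" "finite (Y - nbhd R Y A)"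
    using A N fin finite_subset by auto
  moreover have "\<forall>x\<in>A. 0 \<le> p x" "\<forall>y\<in>nbhd R Y A. 0 \<le> q y"
    "\<forall>x\<in>X - A. 0 \<le> p x" "\<forall>y\<in>Y - nbhd R Y A. 0 \<le> q y"
    using A N nonneg by auto
  ultimately obtain \<nu>1 \<nu>2 where "subcoupling R A (nbhd R Y A) p q \<nu>1"
    and "subcoupling R (X - A) (Y - nbhd R Y A) p q \<nu>2"
    using IH[of A "nbhd R Y A" p q] IH[of "X - A" "Y - nbhd R Y A" p q]
      hall_condition_restrict_to_nbhd[OF hall A(1)] hall_condition_remove_tight[OF hall fin A(1) tight]
    by fastforce
  from subcoupling_glue[OF this A(1) N fin] show ?thesis by blast
qed

theorem subcoupling_exists:
  assumes "finite X" "finite Y" "\<forall>x\<in>X. 0 \<le> p x" "\<forall>y\<in>Y. 0 \<le> q y" "hall_condition R X Y p q"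
  shows "\<exists>\<nu>. subcoupling R X Y p q \<nu>"
  using assms
proof (induction "card X + card Y" arbitrary: X Y p q rule: less_induct)
  case less
  note fin = less.prems(1,2) and nonneg = less.prems(3,4) and hall = less.prems(5)
  have reduce: "\<exists>\<nu>. subcoupling R X Y p' q' \<nu>"
    if "\<forall>x\<in>X. 0 \<le> p' x" "\<forall>y\<in>Y. 0 \<le> q' y" "hall_condition R X Y p' q'"
      "hall_reducible R X Y p' q'" for p' q'
    by (rule subcoupling_exists_if_reducible[OF _ fin that]) (fact less.hyps)
  show ?case
  proof (cases "X = {}")
    case True
    then have "subcoupling R X Y p q (\<lambda>x y. 0)" using nonneg unfolding subcoupling_def by auto
    then show ?thesis by blast
  next
    case False
    then obtain x0 where x0: "x0 \<in> X" by blast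
    show ?thesis
    proof (cases "\<exists>y0\<in>Y. R x0 y0")
      case False
      then have "nbhd R Y {x0} = {}" unfolding nbhd_def by auto
      moreover have "sum p {x0} \<le> sum q (nbhd R Y {x0})"
        using hall x0 unfolding hall_condition_def by (simp del: sum.insert)
      ultimately have "p x0 = 0" using nonneg x0 by force
      then show ?thesis using reduce[OF nonneg hall] x0 unfolding hall_reducible_def by blast
    next
      case True
      then obtain y0 where y0: "y0 \<in> Y" "R x0 y0" by blast
      obtain t where t: "0 \<le> t" "t \<le> p x0" "t \<le> q y0"
        and hall': "hall_condition R X Y (\<lambda>x. p x - (if x = x0 then t else 0))
                      (\<lambda>y. q y - (if y = y0 then t else 0))"
        and saturated: "t = p x0 \<or> t = q y0
                        \<or> (\<exists>A \<subseteq> X - {x0}. y0 \<in> nbhd R Y A \<and> sum p A + t = sum q (nbhd R Y A))"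
        by (rule hall_condition_saturate_edge[OF hall fin nonneg x0 y0])
      have nonneg': "\<forall>x\<in>X. 0 \<le> p x - (if x = x0 then t else 0)"
        "\<forall>y\<in>Y. 0 \<le> q y - (if y = y0 then t else 0)"
        using nonneg t by auto
      obtain \<nu> where "subcoupling R X Y (\<lambda>x. p x - (if x = x0 then t else 0))
                             (\<lambda>y. q y - (if y = y0 then t else 0)) \<nu>"
        using reduce[OF nonneg' hall' hall_reducible_after_saturation[OF fin x0 y0(1) saturated]] by blast
      from subcoupling_add[OF this subcoupling_point_mass[where R = R, OF fin x0 y0 t(1)]]
      have "subcoupling R X Y p q (\<lambda>x y. \<nu> x y + (if x = x0 \<and> y = y0 then t else 0))"
        by (rule subcoupling_cong) auto
      then show ?thesis by blast
    qed
  qed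
qed

theorem strassen_monotone_coupling:
  assumes fin: "finite C"
    and refl: "\<And>x. x \<in> C \<Longrightarrow> R x x"
    and trans: "\<And>x y z. x \<in> C \<Longrightarrow> y \<in> C \<Longrightarrow> z \<in> C \<Longrightarrow> R x y \<Longrightarrow> R y z \<Longrightarrow> R x z"
    and nonneg: "\<forall>x\<in>C. 0 \<le> p x" "\<forall>x\<in>C. 0 \<le> q x"
    and mass: "sum p C = sum q C"
    and dominated: "\<And>U. U \<subseteq> C \<Longrightarrow> \<forall>x\<in>U. \<forall>y\<in>C. R x y \<longrightarrow> y \<in> U \<Longrightarrow> sum p U \<le> sum q U"
  obtains \<nu> where "subcoupling R C C p q \<nu>" "\<forall>y\<in>C. (\<Sum>x\<in>C. \<nu> x y) = q y"
proof -
  have "hall_condition R C C p q"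
    unfolding hall_condition_def
  proof (intro allI impI)
    fix A assume A: "A \<subseteq> C"
    have "A \<subseteq> nbhd R C A" using A refl unfolding nbhd_def by auto
    have N: "nbhd R C A \<subseteq> C" unfolding nbhd_def by auto
    have "\<forall>z\<in>nbhd R C A. \<forall>y\<in>C. R z y \<longrightarrow> y \<in> nbhd R C A"
    proof (intro ballI impI)
      fix z y assume "z \<in> nbhd R C A" "y \<in> C" "R z y"
      then obtain x where "x \<in> A" "R x z" "z \<in> C" unfolding nbhd_def by auto
      with A have "R x y" using trans \<open>y \<in> C\<close> \<open>R z y\<close> by blast
      with \<open>x \<in> A\<close> \<open>y \<in> C\<close> show "y \<in> nbhd R C A" unfolding nbhd_def by auto
    qed
    then have "sum p (nbhd R C A) \<le> sum q (nbhd R C A)" by (rule dominated[OF N])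
    moreover have "sum p A \<le> sum p (nbhd R C A)"
      by (rule sum_mono2) (use fin N \<open>A \<subseteq> nbhd R C A\<close> nonneg in \<open>auto intro: finite_subset\<close>)
    ultimately show "sum p A \<le> sum q (nbhd R C A)" by linarith
  qed
  then obtain \<nu> where \<nu>: "subcoupling R C C p q \<nu>"
    using subcoupling_exists[OF fin fin nonneg] by blast
  show thesis by (rule that[OF \<nu> subcoupling_balanced_columns[OF \<nu> fin fin mass]])
qed

lemma measure_pmf_prob_sum_fibres:
  assumes "finite U"
  shows "(\<Sum>x\<in>U. measure_pmf.prob P {\<omega>. f \<omega> = x \<and> Q \<omega>}) = measure_pmf.prob P {\<omega>. f \<omega> \<in> U \<and> Q \<omega>}"
proof -
  have "{\<omega>. f \<omega> \<in> U \<and> Q \<omega>} = (\<Union>x\<in>U. {\<omega>. f \<omega> = x \<and> Q \<omega>})" by auto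
  moreover have "measure_pmf.prob P (\<Union>x\<in>U. {\<omega>. f \<omega> = x \<and> Q \<omega>})
      = (\<Sum>x\<in>U. measure_pmf.prob P {\<omega>. f \<omega> = x \<and> Q \<omega>})"
    using assms by (intro measure_pmf.finite_measure_finite_Union) (auto simp: disjoint_family_on_def)
  ultimately show ?thesis by simp
qed

lemma tup_in_PiE: "tup X L \<omega> \<in> L \<rightarrow>\<^sub>E UNIV"
  unfolding tup_def by auto

lemma tup_insert_eq_iff:
  assumes "aK \<in> K \<rightarrow>\<^sub>E UNIV" "i \<notin> K"
  shows "tup X (insert i K) \<omega> = aK(i := c) \<longleftrightarrow> tup X K \<omega> = aK \<and> X i \<omega> = c"
proof -
  have "tup X (insert i K) \<omega> = (tup X K \<omega>)(i := X i \<omega>)"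
    using assms(2) unfolding tup_def by (simp del: restrict_upd add: fun_eq_iff)
  moreover have "tup X K \<omega> i = aK i" using assms unfolding tup_def by (auto simp: PiE_def extensional_def)
  ultimately show ?thesis by (auto simp: fun_eq_iff)
qed

lemma cond_exp_indicator:
  "cond_exp P E (\<lambda>\<omega>. indicator U (f \<omega>))
     = measure_pmf.prob P {\<omega>. f \<omega> \<in> U \<and> \<omega> \<in> E} / measure_pmf.prob P E"
proof -
  have "(\<lambda>\<omega>. indicator E \<omega> * indicator U (f \<omega>) :: real) = indicator {\<omega>. f \<omega> \<in> U \<and> \<omega> \<in> E}"
    by (auto simp: indicator_def fun_eq_iff)
  then show ?thesis unfolding cond_exp_def by simp
qed

lemma sum_cond_dist:
  assumes "finite U"
  shows "(\<Sum>x\<in>U. cond_dist P X L K aK i c x)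
    = measure_pmf.prob P {\<omega>. tup X L \<omega> \<in> U \<and> tup X K \<omega> = aK \<and> X i \<omega> = c}
      / measure_pmf.prob P {\<omega>. tup X K \<omega> = aK \<and> X i \<omega> = c}"
  unfolding cond_dist_def sum_divide_distrib[symmetric]
  using measure_pmf_prob_sum_fibres[OF assms, of P "tup X L" "\<lambda>\<omega>. tup X K \<omega> = aK \<and> X i \<omega> = c"]
  by simp

lemma sum_cond_dist_PiE:
  assumes "finite L" "measure_pmf.prob P {\<omega>. tup X K \<omega> = aK \<and> X i \<omega> = c} \<noteq> 0"
  shows "(\<Sum>x\<in>L \<rightarrow>\<^sub>E UNIV. cond_dist P X L K aK i c x) = 1"
proof -
  have "finite (L \<rightarrow>\<^sub>E (UNIV :: bool set))" using assms(1) by (simp add: finite_PiE)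
  moreover have "{\<omega>. tup X L \<omega> \<in> L \<rightarrow>\<^sub>E UNIV \<and> tup X K \<omega> = aK \<and> X i \<omega> = c}
      = {\<omega>. tup X K \<omega> = aK \<and> X i \<omega> = c}"
    by (simp add: tup_in_PiE)
  ultimately show ?thesis using assms(2) sum_cond_dist[of "L \<rightarrow>\<^sub>E UNIV" P X L K aK i c] by simp
qed

lemma cond_dist_nonneg: "0 \<le> cond_dist P X L K aK i c x"
  unfolding cond_dist_def by simp

lemma cond_dist_le_1: "cond_dist P X L K aK i c x \<le> 1"
proof -
  let ?E = "{\<omega>. tup X K \<omega> = aK \<and> X i \<omega> = c}"
  have le: "measure_pmf.prob P {\<omega>. tup X L \<omega> = x \<and> tup X K \<omega> = aK \<and> X i \<omega> = c}
      \<le> measure_pmf.prob P ?E"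
    by (intro measure_pmf.finite_measure_mono) auto
  show ?thesis
  proof (cases "measure_pmf.prob P ?E = 0")
    case False
    then have "0 < measure_pmf.prob P ?E" using measure_nonneg[of "measure_pmf P" ?E] by linarith
    then show ?thesis using le unfolding cond_dist_def by simp
  qed (simp add: cond_dist_def)
qed

lemma negative_regression_cond_dist_dominated:
  assumes NR: "negative_regression n P X"
    and K: "K \<subseteq> {1..n}" and aK: "aK \<in> K \<rightarrow>\<^sub>E UNIV" and i: "i \<in> {1..n} - K"
    and pos0: "measure_pmf.prob P {\<omega>. tup X K \<omega> = aK \<and> X i \<omega> = False} > 0"
    and pos1: "measure_pmf.prob P {\<omega>. tup X K \<omega> = aK \<and> X i \<omega> = True} > 0"
    and L: "L \<subseteq> {1..n}" "L \<inter> insert i K = {}"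
    and U: "U \<subseteq> L \<rightarrow>\<^sub>E UNIV"
    and up: "\<forall>x\<in>U. \<forall>y\<in>L \<rightarrow>\<^sub>E UNIV. (\<forall>j\<in>L. x j \<le> y j) \<longrightarrow> y \<in> U"
  shows "(\<Sum>x\<in>U. cond_dist P X L K aK i True x) \<le> (\<Sum>x\<in>U. cond_dist P X L K aK i False x)"
proof -
  let ?E = "\<lambda>c. {\<omega>. tup X K \<omega> = aK \<and> X i \<omega> = c}"
  have "i \<notin> K" using i by simp
  have "finite L" by (rule finite_subset[OF L(1)]) simp
  then have "finite (L \<rightarrow>\<^sub>E (UNIV :: bool set))" by (simp add: finite_PiE)
  then have "finite U" using U by (rule finite_subset[rotated])
  then have sums: "(\<Sum>x\<in>U. cond_dist P X L K aK i c x)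
      = measure_pmf.prob P {\<omega>. tup X L \<omega> \<in> U \<and> \<omega> \<in> ?E c} / measure_pmf.prob P (?E c)" for c
    by (simp add: sum_cond_dist)
  have mono: "mono_on (L \<rightarrow>\<^sub>E UNIV) (\<lambda>x. indicator U x :: real)"
  proof (rule mono_onI)
    fix x y :: "nat \<Rightarrow> bool" assume "x \<in> L \<rightarrow>\<^sub>E UNIV" "y \<in> L \<rightarrow>\<^sub>E UNIV" "x \<le> y"
    then have "x \<in> U \<Longrightarrow> y \<in> U" using up by (auto simp: le_fun_def)
    then show "indicator U x \<le> (indicator U y :: real)" by (auto simp: indicator_def)
  qed
  have J: "insert i K \<subseteq> {1..n}" using K i by auto
  have a: "aK(i := c) \<in> insert i K \<rightarrow>\<^sub>E UNIV" for c
    using aK by (rule PiE_fun_upd[rotated]) simp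
  have le: "\<forall>j\<in>insert i K. (aK(i := False)) j \<le> (aK(i := True)) j" by simp
  have E: "{\<omega>. tup X (insert i K) \<omega> = aK(i := c)} = ?E c" for c
    by (simp add: tup_insert_eq_iff[OF aK \<open>i \<notin> K\<close>])
  have "cond_exp P (?E False) (\<lambda>\<omega>. indicator U (tup X L \<omega>))
      \<ge> cond_exp P (?E True) (\<lambda>\<omega>. indicator U (tup X L \<omega>))"
    using NR[unfolded negative_regression_def, rule_format,
        OF L(1) J L(2) mono a[of False] a[of True] le[rule_format], unfolded E] pos0 pos1
    by blast
  then show ?thesis unfolding sums cond_exp_indicator .
qed

theorem mainTheorem3:
  fixes n :: nat and P :: "'a pmf" and X :: "nat \<Rightarrow> 'a \<Rightarrow> bool"
    and K :: "nat set" and aK :: "nat \<Rightarrow> bool" and i :: nat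
  assumes NR: "negative_regression n P X"
    and K: "K \<subseteq> {1..n}" and aK: "aK \<in> K \<rightarrow>\<^sub>E (UNIV :: bool set)"
    and i: "i \<in> {1..n} - K"
    and pos0: "measure_pmf.prob P {\<omega>. tup X K \<omega> = aK \<and> X i \<omega> = False} > 0"
    and pos1: "measure_pmf.prob P {\<omega>. tup X K \<omega> = aK \<and> X i \<omega> = True} > 0"
  defines "L \<equiv> {1..n} - (K \<union> {i})"
  shows "\<exists>\<nu> :: (nat \<Rightarrow> bool) \<Rightarrow> (nat \<Rightarrow> bool) \<Rightarrow> real.
           (\<forall>x \<in> L \<rightarrow>\<^sub>E (UNIV :: bool set). \<forall>y \<in> L \<rightarrow>\<^sub>E (UNIV :: bool set).
               0 \<le> \<nu> x y \<and> \<nu> x y \<le> 1 \<and> (\<not> (\<forall>j\<in>L. x j \<le> y j) \<longrightarrow> \<nu> x y = 0)) \<and>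
           (\<forall>x \<in> L \<rightarrow>\<^sub>E (UNIV :: bool set).
               cond_dist P X L K aK i True x = (\<Sum>y \<in> L \<rightarrow>\<^sub>E (UNIV :: bool set). \<nu> x y)) \<and>
           (\<forall>y \<in> L \<rightarrow>\<^sub>E (UNIV :: bool set).
               cond_dist P X L K aK i False y = (\<Sum>x \<in> L \<rightarrow>\<^sub>E (UNIV :: bool set). \<nu> x y))"
proof -
  define C where "C = L \<rightarrow>\<^sub>E (UNIV :: bool set)"
  define p where "p = cond_dist P X L K aK i True"
  define q where "q = cond_dist P X L K aK i False"
  have L: "L \<subseteq> {1..n}" "L \<inter> insert i K = {}" unfolding L_def by blast+
  then have "finite L" using finite_subset by blast
  then have "finite C" unfolding C_def by (simp add: finite_PiE)
  have "sum p C = 1" "sum q C = 1"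
    unfolding p_def q_def C_def using pos0 pos1 by (simp_all add: sum_cond_dist_PiE[OF \<open>finite L\<close>])
  have dominated: "sum p U \<le> sum q U"
    if "U \<subseteq> C" "\<forall>x\<in>U. \<forall>y\<in>C. (\<forall>j\<in>L. x j \<le> y j) \<longrightarrow> y \<in> U" for U
    using negative_regression_cond_dist_dominated[OF NR K aK i pos0 pos1 L] that
    unfolding p_def q_def C_def by blast
  obtain \<nu> where \<nu>: "subcoupling (\<lambda>x y. \<forall>j\<in>L. x j \<le> y j) C C p q \<nu>"
    and cols: "\<forall>y\<in>C. (\<Sum>x\<in>C. \<nu> x y) = q y"
    by (rule strassen_monotone_coupling[where R = "\<lambda>x y. \<forall>j\<in>L. x j \<le> y j" and p = p and q = q,
          OF \<open>finite C\<close>])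
      (use \<open>sum p C = 1\<close> \<open>sum q C = 1\<close> dominated
        in \<open>auto simp: p_def q_def cond_dist_nonneg intro: order_trans\<close>)
  have "\<nu> x y \<le> 1" if "x \<in> C" for x y
    using subcoupling_le_marginal[OF \<nu> \<open>finite C\<close> that, of y] cond_dist_le_1 unfolding p_def
    by (rule order_trans)
  with \<nu> cols show ?thesis
    unfolding subcoupling_def p_def q_def C_def by (intro exI[of _ \<nu>]) (auto, meson)
qed

end
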